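(* Let $(X,e\colon X\to M\otimes X)$ be a coalgebra for $F$ on $\mathbf{Met_3}^{C}$ and let $x\in X$. Define $\chi_0=x$, $\chi_n=(M^{n-1}\otimes e)(\chi_{n-1})\in M^n\otimes X$. For any choice of $m_0,m_1,\ldots\in M$ with $\chi_n=m_0\otimes\cdots\otimes m_{n-1}\otimes x_n$ (some $x_n\in X$) for all $n$, and any $z\in\{T,L,R\}$, let $\theta_n(x)=m_0\otimes\cdots\otimes m_{n-1}\otimes z\in G$. Then the limit $\lim_{n\to\infty}\theta_n(x)$ in $S$ exists and is independent of the choice of representatives $m_0,m_1,\ldots$ and of $z$. In particular $f\colon X\to S$, $f(x)=\lim_{n\to\infty}\theta_n(x)$, is well-defined.
   Context: A tripointed metric space is a set with three distinct points $T,L,R$ and a metric bounded by $1$ in which $T,L,R$ have pairwise distance $1$. $\mathbf{Met_3}^{C}$: tripointed metric spaces with continuous maps preserving $T,L,R$. Let $M=\{a,b,c\}$. For a tripointed metric space $X$, $M\times X$ has metric $d((m,x),(n,y))=\tfrac12d(x,y)$ if $m=n$, $1$ otherwise; $M\otimes X$ is the quotient metric space by the equivalence relation generated by $(b,T)\sim(a,L)$, $(a,R)\sim(c,T)$, $(c,L)\sim(b,R)$, with elements $m\otimes x$ and distinguished points $a\otimes T,b\otimes L,c\otimes R$; $F=M\otimes-$, $(M\otimes f)(m\otimes x)=m\otimes f(x)$; $M^n\otimes-$ is the $n$-fold iterate. A coalgebra is a pair $(X,e\colon X\to FX)$. Let $I=\{T,L,R\}$ (discrete metric) and $!\colon I\to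 FI$, $T\mapsto a\otimes T$, $L\mapsto b\otimes L$, $R\mapsto c\otimes R$; the maps $F^n!$ are isometric embeddings and $G$ is the metric union (colimit) of $I\to FI\to F^2I\to\cdots$, so its elements are expressions $m_0\otimes\cdots\otimes m_{n-1}\otimes z$, $z\in\{T,L,R\}$, modulo the induced identifications, and each $M^n\otimes I$ embeds isometrically in $G$. $S$ is the Cauchy completion of $G$ (with distinguished points $T,L,R$), and $G\subseteq S$. *)

theory Defs
  imports Complex_Main
begin

datatype Mlet = Ma | Mb | Mc
datatype tri = TT | LL | RR

record 'p tms =
  car :: "'p set"
  dst :: "'p \<Rightarrow> 'p \<Rightarrow> real"
  ptT :: 'p
  ptL :: 'p
  ptR :: 'p

definition tripointed :: "'p tms \<Rightarrow> bool" where
  "tripointed X \<longleftrightarrow>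
     (\<forall>x\<in>car X. \<forall>y\<in>car X. 0 \<le> dst X x y \<and> dst X x y \<le> 1 \<and>
        (dst X x y = 0 \<longleftrightarrow> x = y) \<and> dst X x y = dst X y x) \<and>
     (\<forall>x\<in>car X. \<forall>y\<in>car X. \<forall>z\<in>car X. dst X x z \<le> dst X x y + dst X y z) \<and>
     ptT X \<in> car X \<and> ptL X \<in> car X \<and> ptR X \<in> car X \<and>
     dst X (ptT X) (ptL X) = 1 \<and> dst X (ptT X) (ptR X) = 1 \<and> dst X (ptL X) (ptR X) = 1"

definition qdist :: "'q set \<Rightarrow> ('q \<Rightarrow> 'q \<Rightarrow> real) \<Rightarrow> ('q \<times> 'q) set \<Rightarrow> 'q set \<Rightarrow> 'q set \<Rightarrow> real" where
  "qdist B d E P Q = Inf { sum_list (map (\<lambda>(p,q). d p q) ch) | ch.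
      ch \<noteq> [] \<and> set ch \<subseteq> B \<times> B \<and> fst (hd ch) \<in> P \<and> snd (last ch) \<in> Q \<and>
      (\<forall>i. Suc i < length ch \<longrightarrow> (snd (ch ! i), fst (ch ! Suc i)) \<in> E) }"

text \<open>Points of M^n \<otimes> X are represented as sets of pairs (word, x): the element
  m0 \<otimes> ... \<otimes> m(n-1) \<otimes> x is represented by the set of all (word, point) expressions
  identified with it.  The element m \<otimes> y of M \<otimes> Y (y a point of Y) is the union of
  the prefixed representatives of its equivalence class in M \<times> Y.\<close>

type_synonym 'x pt = "(Mlet list \<times> 'x) set"

definition prep :: "Mlet \<Rightarrow> 'x pt \<Rightarrow> 'x pt" where
  "prep m y = (\<lambda>(w, x). (m # w, x)) ` y"

definition tbase :: "'x pt tms \<Rightarrow> (Mlet \<times> 'x pt) set" where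
  "tbase Y = UNIV \<times> car Y"

definition tdist :: "'x pt tms \<Rightarrow> Mlet \<times> 'x pt \<Rightarrow> Mlet \<times> 'x pt \<Rightarrow> real" where
  "tdist Y p q = (if fst p = fst q then dst Y (snd p) (snd q) / 2 else 1)"

definition tgen :: "'x pt tms \<Rightarrow> ((Mlet \<times> 'x pt) \<times> (Mlet \<times> 'x pt)) set" where
  "tgen Y = {((Mb, ptT Y), (Ma, ptL Y)), ((Ma, ptR Y), (Mc, ptT Y)), ((Mc, ptL Y), (Mb, ptR Y))}"

definition tequiv :: "'x pt tms \<Rightarrow> ((Mlet \<times> 'x pt) \<times> (Mlet \<times> 'x pt)) set" where
  "tequiv Y = (tgen Y \<union> (tgen Y)\<inverse>)\<^sup>* \<inter> (tbase Y \<times> tbase Y)"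

definition tcls :: "'x pt tms \<Rightarrow> Mlet \<times> 'x pt \<Rightarrow> (Mlet \<times> 'x pt) set" where
  "tcls Y p = tequiv Y `` {p}"

definition tenc :: "(Mlet \<times> 'x pt) set \<Rightarrow> 'x pt" where
  "tenc C = \<Union> ((\<lambda>(m, y). prep m y) ` C)"

definition tens1 :: "'x pt tms \<Rightarrow> Mlet \<Rightarrow> 'x pt \<Rightarrow> 'x pt" where
  "tens1 Y m y = tenc (tcls Y (m, y))"

definition trep :: "'x pt tms \<Rightarrow> 'x pt \<Rightarrow> Mlet \<times> 'x pt" where
  "trep Y \<alpha> = (SOME p. p \<in> tbase Y \<and> \<alpha> = tens1 Y (fst p) (snd p))"

definition Ften :: "'x pt tms \<Rightarrow> 'x pt tms" where
  "Ften Y = \<lparr> car = {tens1 Y m y | m y. y \<in> car Y},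
              dst = (\<lambda>\<alpha> \<beta>. qdist (tbase Y) (tdist Y) (tequiv Y)
                               (tcls Y (trep Y \<alpha>)) (tcls Y (trep Y \<beta>))),
              ptT = tens1 Y Ma (ptT Y), ptL = tens1 Y Mb (ptL Y), ptR = tens1 Y Mc (ptR Y) \<rparr>"

definition Fmap :: "'x pt tms \<Rightarrow> 'x pt tms \<Rightarrow> ('x pt \<Rightarrow> 'x pt) \<Rightarrow> 'x pt \<Rightarrow> 'x pt" where
  "Fmap Y Y' f \<alpha> = tens1 Y' (fst (trep Y \<alpha>)) (f (snd (trep Y \<alpha>)))"

text \<open>X itself (= M^0 \<otimes> X), in the flattened representation\<close>
definition lift :: "'x tms \<Rightarrow> 'x pt tms" where
  "lift X = \<lparr> car = (\<lambda>x. {([], x)}) ` car X,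
              dst = (\<lambda>\<alpha> \<beta>. dst X (snd (the_elem \<alpha>)) (snd (the_elem \<beta>))),
              ptT = {([], ptT X)}, ptL = {([], ptL X)}, ptR = {([], ptR X)} \<rparr>"

definition Fpow :: "'x tms \<Rightarrow> nat \<Rightarrow> 'x pt tms" where
  "Fpow X n = (Ften ^^ n) (lift X)"

primrec tens :: "'x tms \<Rightarrow> Mlet list \<Rightarrow> 'x \<Rightarrow> 'x pt" where
  "tens X [] x = {([], x)}"
| "tens X (m # w) x = tens1 (Fpow X (length w)) m (tens X w x)"

primrec emap :: "'x tms \<Rightarrow> ('x \<Rightarrow> 'x pt) \<Rightarrow> nat \<Rightarrow> 'x pt \<Rightarrow> 'x pt" where
  "emap X e 0 = (\<lambda>\<alpha>. e (snd (the_elem \<alpha>)))"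
| "emap X e (Suc k) = Fmap (Fpow X k) (Fpow X (Suc k)) (emap X e k)"

definition coalg :: "'x tms \<Rightarrow> ('x \<Rightarrow> 'x pt) \<Rightarrow> bool" where
  "coalg X e \<longleftrightarrow> tripointed X \<and>
     (\<forall>x\<in>car X. e x \<in> car (Ften (lift X))) \<and>
     e (ptT X) = ptT (Ften (lift X)) \<and> e (ptL X) = ptL (Ften (lift X)) \<and>
     e (ptR X) = ptR (Ften (lift X)) \<and>
     (\<forall>x\<in>car X. \<forall>\<epsilon>>0. \<exists>\<delta>>0. \<forall>y\<in>car X.
        dst X x y < \<delta> \<longrightarrow> dst (Ften (lift X)) (e x) (e y) < \<epsilon>)"

primrec chi :: "'x tms \<Rightarrow> ('x \<Rightarrow> 'x pt) \<Rightarrow> 'x \<Rightarrow> nat \<Rightarrow> 'x pt" where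
  "chi X e x 0 = {([], x)}"
| "chi X e x (Suc n) = emap X e n (chi X e x n)"

definition Itms :: "tri tms" where
  "Itms = \<lparr> car = UNIV, dst = (\<lambda>x y. if x = y then 0 else 1), ptT = TT, ptL = LL, ptR = RR \<rparr>"

definition bang :: "tri \<Rightarrow> tri pt" where
  "bang z = tens1 (lift Itms) (case z of TT \<Rightarrow> Ma | LL \<Rightarrow> Mb | RR \<Rightarrow> Mc) {([], z)}"

primrec Gembs :: "nat \<Rightarrow> nat \<Rightarrow> tri pt \<Rightarrow> tri pt" where
  "Gembs n 0 \<alpha> = \<alpha>"
| "Gembs n (Suc j) \<alpha> = emap Itms bang (n + j) (Gembs n j \<alpha>)"

text \<open>G = colimit of I \<rightarrow> F I \<rightarrow> F^2 I \<rightarrow> ...\<close>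
definition Grel :: "((nat \<times> tri pt) \<times> (nat \<times> tri pt)) set" where
  "Grel = {((n, \<alpha>), (k, \<beta>)) | n \<alpha> k \<beta>. \<alpha> \<in> car (Fpow Itms n) \<and> \<beta> \<in> car (Fpow Itms k) \<and>
             (\<exists>N \<ge> max n k. Gembs n (N - n) \<alpha> = Gembs k (N - k) \<beta>)}"

definition Gcls :: "nat \<Rightarrow> tri pt \<Rightarrow> (nat \<times> tri pt) set" where
  "Gcls n \<alpha> = Grel `` {(n, \<alpha>)}"

definition Gpts :: "(nat \<times> tri pt) set set" where
  "Gpts = {Gcls n \<alpha> | n \<alpha>. \<alpha> \<in> car (Fpow Itms n)}"

text \<open>metric union: distance computed in a common stage M^N \<otimes> I\<close>
definition dG :: "(nat \<times> tri pt) set \<Rightarrow> (nat \<times> tri pt) set \<Rightarrow> real" where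
  "dG g h = (SOME r. \<exists>(n, \<alpha>)\<in>g. \<exists>(k, \<beta>)\<in>h.
       r = dst (Fpow Itms (max n k)) (Gembs n (max n k - n) \<alpha>) (Gembs k (max n k - k) \<beta>))"

text \<open>S = Cauchy completion of G\<close>
definition Gcauchy :: "(nat \<Rightarrow> (nat \<times> tri pt) set) \<Rightarrow> bool" where
  "Gcauchy s \<longleftrightarrow> (\<forall>n. s n \<in> Gpts) \<and>
     (\<forall>\<epsilon>>0. \<exists>N. \<forall>m\<ge>N. \<forall>n\<ge>N. dG (s m) (s n) < \<epsilon>)"

definition Srel :: "((nat \<Rightarrow> (nat \<times> tri pt) set) \<times> (nat \<Rightarrow> (nat \<times> tri pt) set)) set" where
  "Srel = {(s, t). Gcauchy s \<and> Gcauchy t \<and> (\<lambda>n. dG (s n) (t n)) \<longlonglongrightarrow> 0}"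

definition Spts :: "(nat \<Rightarrow> (nat \<times> tri pt) set) set set" where
  "Spts = {Srel `` {s} | s. Gcauchy s}"

definition dS :: "(nat \<Rightarrow> (nat \<times> tri pt) set) set \<Rightarrow> (nat \<Rightarrow> (nat \<times> tri pt) set) set \<Rightarrow> real" where
  "dS A B = lim (\<lambda>n. dG ((SOME s. s \<in> A) n) ((SOME t. t \<in> B) n))"

definition Sinc :: "(nat \<times> tri pt) set \<Rightarrow> (nat \<Rightarrow> (nat \<times> tri pt) set) set" where
  "Sinc g = Srel `` {(\<lambda>_. g)}"

definition theta :: "(nat \<Rightarrow> Mlet) \<Rightarrow> tri \<Rightarrow> nat \<Rightarrow> (nat \<times> tri pt) set" where
  "theta ms z n = Gcls n (tens Itms (map ms [0..<n]) z)"

end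

theory Submission
  imports Defs
begin

(* Two choices of letters as in the statement give expressions m0 ... m(n-1) x_n and
   m0' ... m(n-1)' x_n' of the same point chi_n of M^n (x) X.  Peeling off one letter at a time,
   two expressions m (x) y = m' (x) y' either have m = m' and y = y', or they are glued at a
   corner, and then y, y' are corners of M^(n-1) (x) X, whose only expressions are the constant
   corner words.  Since M (x) - halves distances inside one letter, replacing the final points by
   z, z' in I gives points of M^n (x) I at distance at most 2 * 2^-n.  As theta_n and theta_k
   (n <= k) share their first n letters, d(theta_n, theta_k) <= 2^-n, so every such sequence is
   Cauchy and all of them converge to the same point of S.

   Distances in G are computed at a common stage M^N (x) I; this is consistent because the
   connecting maps F^k ! are isometries, which in turn rests on describing the quotient metric of
   M (x) Y by chains whose links are glueings. *)

section \<open>Chains and quotient distances\<close>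

definition qchain :: "'q set \<Rightarrow> ('q \<times> 'q) set \<Rightarrow> 'q set \<Rightarrow> 'q set \<Rightarrow> ('q \<times> 'q) list \<Rightarrow> bool" where
  "qchain B E P Q ch \<longleftrightarrow> ch \<noteq> [] \<and> set ch \<subseteq> B \<times> B \<and> fst (hd ch) \<in> P \<and> snd (last ch) \<in> Q \<and>
      (\<forall>i. Suc i < length ch \<longrightarrow> (snd (ch ! i), fst (ch ! Suc i)) \<in> E)"

definition chain_cost :: "('q \<Rightarrow> 'q \<Rightarrow> real) \<Rightarrow> ('q \<times> 'q) list \<Rightarrow> real" where
  "chain_cost d ch = sum_list (map (\<lambda>(p, q). d p q) ch)"

lemma qdist_eq_Inf_chain_cost: "qdist B d E P Q = Inf (chain_cost d ` {ch. qchain B E P Q ch})"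
  unfolding qdist_def qchain_def chain_cost_def by (rule arg_cong[where f = Inf]) blast

lemma chain_cost_Nil [simp]: "chain_cost d [] = 0"
  and chain_cost_Cons [simp]: "chain_cost d (x # ch) = d (fst x) (snd x) + chain_cost d ch"
  and chain_cost_append [simp]: "chain_cost d (ch @ ch') = chain_cost d ch + chain_cost d ch'"
  by (simp_all add: chain_cost_def split_beta)

lemma chain_cost_nonneg:
  "set ch \<subseteq> B \<times> B \<Longrightarrow> \<forall>p\<in>B. \<forall>q\<in>B. 0 \<le> d p q \<Longrightarrow> 0 \<le> chain_cost d ch"
  by (induction ch) auto

lemma qdist_le_chain_cost:
  assumes "qchain B E P Q ch" and "\<forall>p\<in>B. \<forall>q\<in>B. 0 \<le> d p q"
  shows "qdist B d E P Q \<le> chain_cost d ch"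
proof -
  have "bdd_below (chain_cost d ` {ch. qchain B E P Q ch})"
    using assms(2) by (intro bdd_belowI[where m = 0]) (auto simp: qchain_def intro: chain_cost_nonneg)
  then show ?thesis
    unfolding qdist_eq_Inf_chain_cost using assms(1) by (intro cInf_lower) auto
qed

lemma qdist_greatest:
  "qchain B E P Q ch0 \<Longrightarrow> (\<And>ch. qchain B E P Q ch \<Longrightarrow> c \<le> chain_cost d ch) \<Longrightarrow> c \<le> qdist B d E P Q"
  unfolding qdist_eq_Inf_chain_cost by (intro cInf_greatest) auto

lemma qdist_nonneg:
  "qchain B E P Q ch0 \<Longrightarrow> \<forall>p\<in>B. \<forall>q\<in>B. 0 \<le> d p q \<Longrightarrow> 0 \<le> qdist B d E P Q"
  by (rule qdist_greatest) (auto simp: qchain_def intro: chain_cost_nonneg)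

lemma qchain_append:
  assumes "qchain B E P Q ch" "qchain B E Q R ch'" and Q: "Q \<times> Q \<subseteq> E"
  shows "qchain B E P R (ch @ ch')"
proof -
  have ne: "ch \<noteq> []" "ch' \<noteq> []" using assms by (auto simp: qchain_def)
  have "(snd ((ch @ ch') ! i), fst ((ch @ ch') ! Suc i)) \<in> E" if i: "Suc i < length (ch @ ch')" for i
  proof -
    consider "Suc i < length ch" | "Suc i = length ch" | "length ch \<le> i" by linarith
    then show ?thesis
    proof cases
      case 1
      then show ?thesis using assms(1) by (auto simp: qchain_def nth_append)
    next
      case 2
      then have "i = length ch - 1" by simp
      with 2 have "(ch @ ch') ! i = last ch" "(ch @ ch') ! Suc i = hd ch'"
        using ne by (simp_all add: nth_append last_conv_nth hd_conv_nth)
      then show ?thesis using assms by (auto simp: qchain_def)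
    next
      case 3
      then have "(ch @ ch') ! i = ch' ! (i - length ch)" "(ch @ ch') ! Suc i = ch' ! Suc (i - length ch)"
        "Suc (i - length ch) < length ch'"
        using i by (simp_all add: nth_append Suc_diff_le)
      then show ?thesis using assms(2) by (auto simp: qchain_def)
    qed
  qed
  then show ?thesis using assms ne unfolding qchain_def by auto
qed

lemma qdist_triangle:
  assumes "qchain B E P Q ch" "qchain B E Q R ch'" "Q \<times> Q \<subseteq> E"
    and nonneg: "\<forall>p\<in>B. \<forall>q\<in>B. 0 \<le> d p q"
  shows "qdist B d E P R \<le> qdist B d E P Q + qdist B d E Q R"
proof -
  have "qdist B d E P R - chain_cost d c' \<le> qdist B d E P Q" if c': "qchain B E Q R c'" for c'
  proof (rule qdist_greatest[OF assms(1)])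
    fix c assume c: "qchain B E P Q c"
    show "qdist B d E P R - chain_cost d c' \<le> chain_cost d c"
      using qdist_le_chain_cost[OF qchain_append[OF c c' assms(3)] nonneg] by simp
  qed
  then have "qdist B d E P R - qdist B d E P Q \<le> qdist B d E Q R"
    by (intro qdist_greatest[OF assms(2)]) (simp add: algebra_simps)
  then show ?thesis by simp
qed

lemma lipschitz_invariant_le_chain_cost:
  assumes "ch \<noteq> []" "set ch \<subseteq> B \<times> B" "\<forall>i. Suc i < length ch \<longrightarrow> (snd (ch ! i), fst (ch ! Suc i)) \<in> E"
    and lip: "\<forall>p\<in>B. \<forall>q\<in>B. \<bar>\<phi> p - \<phi> q\<bar> \<le> d p q" and inv: "\<forall>(p, q)\<in>E. \<phi> p = \<phi> q"
  shows "\<bar>\<phi> (fst (hd ch)) - \<phi> (snd (last ch))\<bar> \<le> chain_cost d ch"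
  using assms(1-3)
proof (induction ch)
  case Nil
  then show ?case by simp
next
  case (Cons x ch)
  have x: "\<bar>\<phi> (fst x) - \<phi> (snd x)\<bar> \<le> d (fst x) (snd x)"
    using Cons.prems(2) lip by (cases x) auto
  show ?case
  proof (cases "ch = []")
    case True
    then show ?thesis using x by simp
  next
    case False
    have "(snd x, fst (hd ch)) \<in> E"
      using Cons.prems(3)[rule_format, of 0] False by (auto simp: hd_conv_nth)
    then have link: "\<phi> (snd x) = \<phi> (fst (hd ch))" using inv by auto
    have "\<bar>\<phi> (fst (hd ch)) - \<phi> (snd (last ch))\<bar> \<le> chain_cost d ch"
      using Cons.IH False Cons.prems(2) Cons.prems(3)[rule_format, of "Suc _"] by auto
    then show ?thesis using x link False by simp
  qed
qed

lemma lipschitz_invariant_le_qdist: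
  assumes "qchain B E P Q ch0"
    and "\<forall>p\<in>B. \<forall>q\<in>B. \<bar>\<phi> p - \<phi> q\<bar> \<le> d p q" "\<forall>(p, q)\<in>E. \<phi> p = \<phi> q"
    and "\<forall>p\<in>P. \<phi> p = a" "\<forall>q\<in>Q. \<phi> q = b"
  shows "\<bar>a - b\<bar> \<le> qdist B d E P Q"
proof (rule qdist_greatest[OF assms(1)])
  fix ch assume ch: "qchain B E P Q ch"
  then have "\<bar>\<phi> (fst (hd ch)) - \<phi> (snd (last ch))\<bar> \<le> chain_cost d ch"
    using lipschitz_invariant_le_chain_cost[OF _ _ _ assms(2,3)] unfolding qchain_def by blast
  then show "\<bar>a - b\<bar> \<le> chain_cost d ch" using ch assms(4,5) by (auto simp: qchain_def)
qed

section \<open>Admissible spaces and the glueing relation\<close>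

definition corner :: "tri \<Rightarrow> 'a tms \<Rightarrow> 'a" where
  "corner c Y = (case c of TT \<Rightarrow> ptT Y | LL \<Rightarrow> ptL Y | RR \<Rightarrow> ptR Y)"

definition corner_letter :: "tri \<Rightarrow> Mlet" where
  "corner_letter c = (case c of TT \<Rightarrow> Ma | LL \<Rightarrow> Mb | RR \<Rightarrow> Mc)"

definition glued :: "Mlet \<Rightarrow> tri \<Rightarrow> Mlet \<Rightarrow> tri \<Rightarrow> bool" where
  "glued m c m' c' \<longleftrightarrow> (m, c, m', c') \<in> {(Mb, TT, Ma, LL), (Ma, RR, Mc, TT), (Mc, LL, Mb, RR),
                                             (Ma, LL, Mb, TT), (Mc, TT, Ma, RR), (Mb, RR, Mc, LL)}"

lemma glued_sym: "glued m c m' c' \<Longrightarrow> glued m' c' m c"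
  by (auto simp: glued_def)

lemma glued_unique: "glued m c m' c' \<Longrightarrow> glued m' c' m'' c'' \<Longrightarrow> m'' = m \<and> c'' = c"
  by (auto simp: glued_def)

lemma not_glued_corner_letter: "\<not> glued (corner_letter c) c m' c'"
  by (cases c) (auto simp: glued_def corner_letter_def)

lemma tgen_symmetric_iff:
  "((m, A), (m', B)) \<in> tgen Y \<union> (tgen Y)\<inverse> \<longleftrightarrow>
     (\<exists>c c'. glued m c m' c' \<and> A = corner c Y \<and> B = corner c' Y)"
proof -
  have ex_tri: "(\<exists>c. P c) \<longleftrightarrow> P TT \<or> P LL \<or> P RR" for P by (metis tri.exhaust)
  show ?thesis unfolding ex_tri by (auto simp: tgen_def glued_def corner_def)
qed

text \<open>The flattened representation of \<open>M\<^sup>n \<otimes> X\<close> carries a pseudometric only; what replaces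
  separation is that points are disjoint non-empty sets of expressions, so that \<open>m \<otimes> y\<close>
  determines the class of \<open>(m, y)\<close>.\<close>

locale admissible =
  fixes Y :: "'x pt tms"
  assumes dst_nonneg: "a \<in> car Y \<Longrightarrow> b \<in> car Y \<Longrightarrow> 0 \<le> dst Y a b"
    and dst_le_1: "a \<in> car Y \<Longrightarrow> b \<in> car Y \<Longrightarrow> dst Y a b \<le> 1"
    and dst_commute: "a \<in> car Y \<Longrightarrow> b \<in> car Y \<Longrightarrow> dst Y a b = dst Y b a"
    and dst_self: "a \<in> car Y \<Longrightarrow> dst Y a a = 0"
    and dst_triangle:
      "a \<in> car Y \<Longrightarrow> b \<in> car Y \<Longrightarrow> d \<in> car Y \<Longrightarrow> dst Y a d \<le> dst Y a b + dst Y b d"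
    and corner_in_car: "corner c Y \<in> car Y"
    and corner_inj: "corner c Y = corner c' Y \<Longrightarrow> c = c'"
    and nonempty: "a \<in> car Y \<Longrightarrow> a \<noteq> {}"
    and disjoint: "a \<in> car Y \<Longrightarrow> b \<in> car Y \<Longrightarrow> u \<in> a \<Longrightarrow> u \<in> b \<Longrightarrow> a = b"

lemma tbase_iff [simp]: "p \<in> tbase Y \<longleftrightarrow> snd p \<in> car Y"
  by (cases p) (auto simp: tbase_def)

lemma tequiv_sym: "(p, q) \<in> tequiv Y \<Longrightarrow> (q, p) \<in> tequiv Y"
proof -
  assume pq: "(p, q) \<in> tequiv Y"
  have "(tgen Y \<union> (tgen Y)\<inverse>)\<inverse> = tgen Y \<union> (tgen Y)\<inverse>" by auto
  with pq show ?thesis by (metis IntE IntI mem_Sigma_iff rtrancl_converseI tequiv_def)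
qed

lemma tequiv_trans: "(p, q) \<in> tequiv Y \<Longrightarrow> (q, r) \<in> tequiv Y \<Longrightarrow> (p, r) \<in> tequiv Y"
  unfolding tequiv_def by (auto intro: rtrancl_trans)

lemma tequiv_refl: "p \<in> tbase Y \<Longrightarrow> (p, p) \<in> tequiv Y"
  unfolding tequiv_def by auto

lemma tequiv_tbase: "(p, q) \<in> tequiv Y \<Longrightarrow> p \<in> tbase Y \<and> q \<in> tbase Y"
  unfolding tequiv_def by auto

lemma tcls_iff: "q \<in> tcls Y p \<longleftrightarrow> (p, q) \<in> tequiv Y"
  unfolding tcls_def by auto

lemma tcls_self: "p \<in> tbase Y \<Longrightarrow> p \<in> tcls Y p"
  by (simp add: tcls_iff tequiv_refl)

lemma tcls_eq: "(p, q) \<in> tequiv Y \<Longrightarrow> tcls Y p = tcls Y q"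
  unfolding tcls_def by (auto intro: tequiv_trans tequiv_sym)

lemma tcls_square_subset_tequiv: "tcls Y p \<times> tcls Y p \<subseteq> tequiv Y"
  unfolding tcls_def by (auto intro: tequiv_trans tequiv_sym)

context admissible
begin

lemma corner_eq_iff: "corner c Y = corner c' Y \<longleftrightarrow> c = c'"
  using corner_inj by blast

text \<open>Two glueing steps in a row lead back to the start, since each corner is glued to only
  one other expression.\<close>

lemma tequiv_iff:
  "((m, A), (m', B)) \<in> tequiv Y \<longleftrightarrow> A \<in> car Y \<and> B \<in> car Y \<and>
     (m = m' \<and> A = B \<or> (\<exists>c c'. glued m c m' c' \<and> A = corner c Y \<and> B = corner c' Y))"
proof -
  let ?R = "tgen Y \<union> (tgen Y)\<inverse>"
  have two_steps: "p = r" if pq: "(p, q) \<in> ?R" and qr: "(q, r) \<in> ?R" for p q r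
  proof -
    obtain m1 A1 m2 A2 m3 A3 where p: "p = (m1, A1)" and q: "q = (m2, A2)" and r: "r = (m3, A3)"
      by (metis surj_pair)
    obtain c1 c2 where 1: "glued m1 c1 m2 c2" "A1 = corner c1 Y" "A2 = corner c2 Y"
      using pq unfolding p q tgen_symmetric_iff by blast
    obtain d2 d3 where 2: "glued m2 d2 m3 d3" "A2 = corner d2 Y" "A3 = corner d3 Y"
      using qr unfolding q r tgen_symmetric_iff by blast
    have "d2 = c2" using 1(3) 2(2) by (simp add: corner_inj)
    then show ?thesis using glued_unique[OF 1(1)] 1 2 p r by simp
  qed
  have "p = q \<or> (p, q) \<in> ?R" if "(p, q) \<in> ?R\<^sup>*" for p q
    using that
  proof (induction rule: rtrancl_induct)
    case (step q r)
    then show ?case by (metis two_steps)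
  qed simp
  then have star: "((m, A), (m', B)) \<in> ?R\<^sup>* \<longleftrightarrow> (m, A) = (m', B) \<or> ((m, A), (m', B)) \<in> ?R"
    by blast
  show ?thesis
    unfolding tequiv_def Int_iff star tgen_symmetric_iff by auto
qed

lemma tdist_nonneg: "p \<in> tbase Y \<Longrightarrow> q \<in> tbase Y \<Longrightarrow> 0 \<le> tdist Y p q"
  by (simp add: tdist_def dst_nonneg)

lemma tdist_le_1: "p \<in> tbase Y \<Longrightarrow> q \<in> tbase Y \<Longrightarrow> tdist Y p q \<le> 1"
  using dst_le_1[of "snd p" "snd q"] by (simp add: tdist_def)

lemma tdist_commute: "p \<in> tbase Y \<Longrightarrow> q \<in> tbase Y \<Longrightarrow> tdist Y p q = tdist Y q p"
  by (simp add: tdist_def dst_commute)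

lemma tdist_self: "p \<in> tbase Y \<Longrightarrow> tdist Y p p = 0"
  by (simp add: tdist_def dst_self)

lemma tdist_triangle:
  "p \<in> tbase Y \<Longrightarrow> q \<in> tbase Y \<Longrightarrow> r \<in> tbase Y \<Longrightarrow> tdist Y p r \<le> tdist Y p q + tdist Y q r"
  using dst_triangle[of "snd p" "snd q" "snd r"] dst_nonneg[of "snd p" "snd q"]
    dst_nonneg[of "snd q" "snd r"] dst_le_1[of "snd p" "snd r"]
  by (auto simp: tdist_def)

end

definition tqdist :: "'x pt tms \<Rightarrow> Mlet \<times> 'x pt \<Rightarrow> Mlet \<times> 'x pt \<Rightarrow> real" where
  "tqdist Y p q = qdist (tbase Y) (tdist Y) (tequiv Y) (tcls Y p) (tcls Y q)"

lemma qchain_single: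
  "p \<in> tbase Y \<Longrightarrow> q \<in> tbase Y \<Longrightarrow> qchain (tbase Y) (tequiv Y) (tcls Y p) (tcls Y q) [(p, q)]"
  unfolding qchain_def by (auto intro: tcls_self)

lemma tqdist_cong: "(p, p') \<in> tequiv Y \<Longrightarrow> (q, q') \<in> tequiv Y \<Longrightarrow> tqdist Y p q = tqdist Y p' q'"
  unfolding tqdist_def by (metis tcls_eq)

context admissible
begin

lemma tdist_nonneg_on: "\<forall>p\<in>tbase Y. \<forall>q\<in>tbase Y. 0 \<le> tdist Y p q"
  by (simp add: tdist_nonneg)

lemma tqdist_le_tdist: "p \<in> tbase Y \<Longrightarrow> q \<in> tbase Y \<Longrightarrow> tqdist Y p q \<le> tdist Y p q"
  unfolding tqdist_def using qdist_le_chain_cost[OF qchain_single tdist_nonneg_on] by simp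

lemma tqdist_nonneg: "p \<in> tbase Y \<Longrightarrow> q \<in> tbase Y \<Longrightarrow> 0 \<le> tqdist Y p q"
  unfolding tqdist_def by (rule qdist_nonneg[OF qchain_single tdist_nonneg_on])

lemma tqdist_le_1: "p \<in> tbase Y \<Longrightarrow> q \<in> tbase Y \<Longrightarrow> tqdist Y p q \<le> 1"
  using tqdist_le_tdist[of p q] tdist_le_1[of p q] by linarith

lemma tqdist_self: "p \<in> tbase Y \<Longrightarrow> tqdist Y p p = 0"
  using tqdist_le_tdist[of p p] tqdist_nonneg[of p p] tdist_self[of p] by linarith

lemma tqdist_triangle:
  "p \<in> tbase Y \<Longrightarrow> q \<in> tbase Y \<Longrightarrow> r \<in> tbase Y \<Longrightarrow> tqdist Y p r \<le> tqdist Y p q + tqdist Y q r"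
  unfolding tqdist_def
  by (rule qdist_triangle[OF qchain_single qchain_single tcls_square_subset_tequiv tdist_nonneg_on])

lemma lipschitz_invariant_le_tqdist:
  assumes "p \<in> tbase Y" "q \<in> tbase Y"
    and lip: "\<And>p q. p \<in> tbase Y \<Longrightarrow> q \<in> tbase Y \<Longrightarrow> \<bar>\<phi> p - \<phi> q\<bar> \<le> tdist Y p q"
    and inv: "\<And>p q. (p, q) \<in> tequiv Y \<Longrightarrow> \<phi> p = \<phi> q"
  shows "\<bar>\<phi> p - \<phi> q\<bar> \<le> tqdist Y p q"
proof -
  have cls: "\<forall>p'\<in>tcls Y p0. \<phi> p' = \<phi> p0" for p0
    using inv by (metis tcls_iff)
  have "\<forall>(p', q')\<in>tequiv Y. \<phi> p' = \<phi> q'" using inv by blast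
  from lipschitz_invariant_le_qdist[OF qchain_single[OF assms(1,2)] _ this cls cls]
  show ?thesis unfolding tqdist_def using lip by blast
qed

lemma tqdist_lipschitz:
  "a \<in> tbase Y \<Longrightarrow> p \<in> tbase Y \<Longrightarrow> q \<in> tbase Y \<Longrightarrow> \<bar>tqdist Y a p - tqdist Y a q\<bar> \<le> tdist Y p q"
  using tqdist_triangle[of a p q] tqdist_triangle[of a q p] tqdist_le_tdist[of p q]
    tqdist_le_tdist[of q p] tdist_commute[of p q] by linarith

lemma tqdist_commute: "p \<in> tbase Y \<Longrightarrow> q \<in> tbase Y \<Longrightarrow> tqdist Y p q = tqdist Y q p"
proof -
  have "tqdist Y q p \<le> tqdist Y p q" if "p \<in> tbase Y" "q \<in> tbase Y" for p q
  proof -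
    have "\<bar>tqdist Y q p - tqdist Y q q\<bar> \<le> tqdist Y p q"
    proof (rule lipschitz_invariant_le_tqdist[OF that])
      show "\<bar>tqdist Y q p' - tqdist Y q q'\<bar> \<le> tdist Y p' q'" if "p' \<in> tbase Y" "q' \<in> tbase Y" for p' q'
        using tqdist_lipschitz[OF \<open>q \<in> tbase Y\<close> that] .
      show "tqdist Y q p' = tqdist Y q q'" if "(p', q') \<in> tequiv Y" for p' q'
        using tqdist_cong[OF tequiv_refl that] \<open>q \<in> tbase Y\<close> by blast
    qed
    then show ?thesis using tqdist_self[OF that(2)] by simp
  qed
  then show "p \<in> tbase Y \<Longrightarrow> q \<in> tbase Y \<Longrightarrow> ?thesis" by (metis order_antisym)
qed

end

section \<open>The space \<open>M \<otimes> Y\<close>\<close>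

lemma mem_tens1_iff:
  "u \<in> tens1 Y m y \<longleftrightarrow> (\<exists>m' y' w x. ((m, y), (m', y')) \<in> tequiv Y \<and> (w, x) \<in> y' \<and> u = (m' # w, x))"
  unfolding tens1_def tenc_def prep_def tcls_def by force

lemma Cons_mem_tens1: "y \<in> car Y \<Longrightarrow> (w, x) \<in> y \<Longrightarrow> (m # w, x) \<in> tens1 Y m y"
  using tequiv_refl[of "(m, y)" Y] unfolding mem_tens1_iff by auto

lemma tens1_eq: "((m, y), (m', y')) \<in> tequiv Y \<Longrightarrow> tens1 Y m y = tens1 Y m' y'"
  unfolding tens1_def by (metis tcls_eq)

lemma car_Ften: "\<alpha> \<in> car (Ften Y) \<longleftrightarrow> (\<exists>m y. y \<in> car Y \<and> \<alpha> = tens1 Y m y)"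
  unfolding Ften_def by auto

lemma tens1_in_car_Ften: "y \<in> car Y \<Longrightarrow> tens1 Y m y \<in> car (Ften Y)"
  unfolding car_Ften by blast

lemma car_FtenE:
  assumes "\<alpha> \<in> car (Ften Y)"
  obtains m y where "y \<in> car Y" "\<alpha> = tens1 Y m y"
  using assms unfolding car_Ften by blast

lemma corner_Ften: "corner c (Ften Y) = tens1 Y (corner_letter c) (corner c Y)"
  by (cases c) (simp_all add: corner_def corner_letter_def Ften_def)

context admissible
begin

lemma tens1_disjoint:
  assumes "y \<in> car Y" "y' \<in> car Y" "u \<in> tens1 Y m y" "u \<in> tens1 Y m' y'"
  shows "((m, y), (m', y')) \<in> tequiv Y"
proof -
  obtain m1 y1 w1 x1 where 1: "((m, y), (m1, y1)) \<in> tequiv Y" "(w1, x1) \<in> y1" "u = (m1 # w1, x1)"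
    using assms(3) unfolding mem_tens1_iff by blast
  obtain m2 y2 w2 x2 where 2: "((m', y'), (m2, y2)) \<in> tequiv Y" "(w2, x2) \<in> y2" "u = (m2 # w2, x2)"
    using assms(4) unfolding mem_tens1_iff by blast
  have "y1 \<in> car Y" "y2 \<in> car Y" using 1(1) 2(1) by (auto dest: tequiv_tbase)
  then have "(m1, y1) = (m2, y2)" using 1(2,3) 2(2,3) disjoint by auto
  then show ?thesis using 1(1) 2(1) by (metis tequiv_sym tequiv_trans)
qed

lemma tens1_eq_iff:
  assumes "y \<in> car Y" "y' \<in> car Y"
  shows "tens1 Y m y = tens1 Y m' y' \<longleftrightarrow> ((m, y), (m', y')) \<in> tequiv Y"
proof
  obtain w x where "(w, x) \<in> y" using nonempty[OF assms(1)] by auto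
  then have "(m # w, x) \<in> tens1 Y m y" by (rule Cons_mem_tens1[OF assms(1)])
  then show "tens1 Y m y = tens1 Y m' y' \<Longrightarrow> ((m, y), (m', y')) \<in> tequiv Y"
    using tens1_disjoint[OF assms] by simp
qed (rule tens1_eq)

lemma trep_tens1: "y \<in> car Y \<Longrightarrow> (trep Y (tens1 Y m y), (m, y)) \<in> tequiv Y"
  unfolding trep_def
  by (rule someI2[where a = "(m, y)"]) (auto simp: tens1_eq_iff dest: tequiv_sym)

lemma dst_Ften_tens1:
  "y \<in> car Y \<Longrightarrow> y' \<in> car Y \<Longrightarrow> dst (Ften Y) (tens1 Y m y) (tens1 Y m' y') = tqdist Y (m, y) (m', y')"
  unfolding Ften_def by (simp add: tqdist_def tcls_eq[OF trep_tens1])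

lemma corner_Ften_inj: "corner c (Ften Y) = corner c' (Ften Y) \<Longrightarrow> c = c'"
  unfolding corner_Ften using not_glued_corner_letter
  by (auto simp: tens1_eq_iff corner_in_car tequiv_iff corner_eq_iff)

lemma admissible_Ften: "admissible (Ften Y)"
proof
  fix a b d assume ab: "a \<in> car (Ften Y)" "b \<in> car (Ften Y)" and d: "d \<in> car (Ften Y)"
  from ab obtain m y m' y' where y: "y \<in> car Y" "a = tens1 Y m y" and y': "y' \<in> car Y" "b = tens1 Y m' y'"
    by (auto elim!: car_FtenE)
  from d obtain m'' y'' where y'': "y'' \<in> car Y" "d = tens1 Y m'' y''" by (auto elim!: car_FtenE)
  show "0 \<le> dst (Ften Y) a b" "dst (Ften Y) a b \<le> 1" "dst (Ften Y) a a = 0"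
    "dst (Ften Y) a d \<le> dst (Ften Y) a b + dst (Ften Y) b d"
    using y y' y'' by (simp_all add: dst_Ften_tens1 tqdist_nonneg tqdist_le_1 tqdist_self tqdist_triangle)
  show "dst (Ften Y) a b = dst (Ften Y) b a"
    using y y' tqdist_commute[of "(m, y)" "(m', y')"] by (simp add: dst_Ften_tens1)
  show "a \<noteq> {}" using y Cons_mem_tens1 nonempty by fastforce
  show "u \<in> a \<Longrightarrow> u \<in> b \<Longrightarrow> a = b" for u
    using y y' tens1_disjoint tens1_eq by metis
next
  show "corner c (Ften Y) \<in> car (Ften Y)" for c
    unfolding corner_Ften by (rule tens1_in_car_Ften[OF corner_in_car])
qed (rule corner_Ften_inj)

end

lemma Fpow_0 [simp]: "Fpow X 0 = lift X"
  and Fpow_Suc [simp]: "Fpow X (Suc n) = Ften (Fpow X n)"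
  by (simp_all add: Fpow_def)

lemma corner_lift: "corner c (lift X) = {([], corner c X)}"
  by (cases c) (simp_all add: corner_def lift_def)

lemma corner_Fpow: "corner c (Fpow X n) = tens X (replicate n (corner_letter c)) (corner c X)"
  by (induction n) (simp_all add: corner_Ften corner_lift)

lemma tripointed_corner_in_car: "tripointed X \<Longrightarrow> corner c X \<in> car X"
  by (cases c) (simp_all add: tripointed_def corner_def)

lemma tripointed_corner_inj:
  assumes X: "tripointed X" and eq: "corner c X = corner c' X"
  shows "c = c'"
proof (rule ccontr)
  assume "c \<noteq> c'"
  then have "dst X (corner c X) (corner c' X) = 1 \<or> dst X (corner c' X) (corner c X) = 1"
    using X unfolding tripointed_def corner_def by (cases c; cases c') simp_all
  moreover have "dst X (corner c X) (corner c X) = 0"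
    using X tripointed_corner_in_car[OF X, of c] unfolding tripointed_def by blast
  ultimately show False using eq by auto
qed

lemma admissible_lift:
  assumes X: "tripointed X"
  shows "admissible (lift X)"
proof
  have dst: "\<And>x y. x \<in> car X \<Longrightarrow> y \<in> car X \<Longrightarrow>
      0 \<le> dst X x y \<and> dst X x y \<le> 1 \<and> (dst X x y = 0 \<longleftrightarrow> x = y) \<and> dst X x y = dst X y x"
    and tri: "\<And>x y z. x \<in> car X \<Longrightarrow> y \<in> car X \<Longrightarrow> z \<in> car X \<Longrightarrow> dst X x z \<le> dst X x y + dst X y z"
    using X unfolding tripointed_def by blast+
  fix a b d assume "a \<in> car (lift X)" "b \<in> car (lift X)" "d \<in> car (lift X)"
  then obtain x y z where xyz: "x \<in> car X" "y \<in> car X" "z \<in> car X"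
    and abd: "a = {([], x)}" "b = {([], y)}" "d = {([], z)}"
    by (auto simp: lift_def)
  show "0 \<le> dst (lift X) a b" "dst (lift X) a b \<le> 1" "dst (lift X) a b = dst (lift X) b a"
    "dst (lift X) a a = 0" "dst (lift X) a d \<le> dst (lift X) a b + dst (lift X) b d" "a \<noteq> {}"
    using dst[OF xyz(1,2)] dst[OF xyz(1,1)] tri[OF xyz] by (simp_all add: abd lift_def)
  show "u \<in> a \<Longrightarrow> u \<in> b \<Longrightarrow> a = b" for u by (simp add: abd)
next
  show "corner c (lift X) \<in> car (lift X)" for c
    using tripointed_corner_in_car[OF X] unfolding corner_lift by (simp add: lift_def)
  show "corner c (lift X) = corner c' (lift X) \<Longrightarrow> c = c'" for c c'
    using tripointed_corner_inj[OF X] by (simp add: corner_lift)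
qed

lemma admissible_Fpow: "tripointed X \<Longrightarrow> admissible (Fpow X n)"
  by (induction n) (simp_all add: admissible_lift admissible.admissible_Ften)

lemma tens_in_car: "x \<in> car X \<Longrightarrow> tens X w x \<in> car (Fpow X (length w))"
  by (induction w) (auto simp: lift_def car_Ften)

section \<open>The maps \<open>M \<otimes> f\<close>\<close>

locale pointed_map = source: admissible Y + target: admissible Y'
  for Y :: "'x pt tms" and Y' :: "'x pt tms" +
  fixes f :: "'x pt \<Rightarrow> 'x pt"
  assumes map_car: "y \<in> car Y \<Longrightarrow> f y \<in> car Y'"
    and map_corner: "f (corner c Y) = corner c Y'"
begin

lemma tequiv_map:
  assumes "((m, A), (m', B)) \<in> tequiv Y"
  shows "((m, f A), (m', f B)) \<in> tequiv Y'"
proof -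
  have car: "f A \<in> car Y'" "f B \<in> car Y'" using assms by (simp_all add: source.tequiv_iff map_car)
  from assms consider "m = m'" "A = B" | c c' where "glued m c m' c'" "A = corner c Y" "B = corner c' Y"
    unfolding source.tequiv_iff by blast
  then show ?thesis
  proof cases
    case 2
    then have "f A = corner c Y'" "f B = corner c' Y'" by (simp_all add: map_corner)
    then show ?thesis using car 2(1) unfolding target.tequiv_iff by blast
  qed (simp add: target.tequiv_iff car)
qed

lemma Fmap_tens1: "y \<in> car Y \<Longrightarrow> Fmap Y Y' f (tens1 Y m y) = tens1 Y' m (f y)"
  unfolding Fmap_def using source.trep_tens1 tequiv_map tens1_eq by (metis prod.collapse)

lemma pointed_map_Fmap: "pointed_map (Ften Y) (Ften Y') (Fmap Y Y' f)"
proof (intro pointed_map.intro pointed_map_axioms.intro source.admissible_Ften target.admissible_Ften)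
  show "Fmap Y Y' f \<alpha> \<in> car (Ften Y')" if "\<alpha> \<in> car (Ften Y)" for \<alpha>
    using that map_car unfolding car_Ften by (force simp: Fmap_tens1)
  show "Fmap Y Y' f (corner c (Ften Y)) = corner c (Ften Y')" for c
    by (simp add: corner_Ften Fmap_tens1 source.corner_in_car map_corner)
qed

end

text \<open>Chains map forward, which gives
  one inequality; for the other, \<open>tqdist Y p\<close> is extended from the image of \<open>f\<close> to a
  \<open>1\<close>-Lipschitz, glueing-invariant function on \<open>M \<times> Y'\<close> by an infimal convolution
  (\<open>tqdist_ext\<close>), which then bounds \<open>tqdist Y'\<close> from below.\<close>

locale isometric_pointed_map = pointed_map +
  assumes isometric: "a \<in> car Y \<Longrightarrow> b \<in> car Y \<Longrightarrow> dst Y' (f a) (f b) = dst Y a b"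
begin

lemma tdist_apsnd: "p \<in> tbase Y \<Longrightarrow> q \<in> tbase Y \<Longrightarrow> tdist Y' (apsnd f p) (apsnd f q) = tdist Y p q"
  by (simp add: tdist_def isometric)

lemma apsnd_tbase: "p \<in> tbase Y \<Longrightarrow> apsnd f p \<in> tbase Y'"
  by (simp add: map_car)

lemma tequiv_apsnd: "(p, q) \<in> tequiv Y \<Longrightarrow> (apsnd f p, apsnd f q) \<in> tequiv Y'"
  by (cases p, cases q) (simp add: tequiv_map)

lemma tqdist_apsnd_le:
  assumes p: "p \<in> tbase Y" and q: "q \<in> tbase Y"
  shows "tqdist Y' (apsnd f p) (apsnd f q) \<le> tqdist Y p q"
  unfolding tqdist_def
proof (rule qdist_greatest[OF qchain_single[OF p q]])
  fix ch assume ch: "qchain (tbase Y) (tequiv Y) (tcls Y p) (tcls Y q) ch"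
  let ?ch' = "map (map_prod (apsnd f) (apsnd f)) ch"
  have "set ?ch' \<subseteq> tbase Y' \<times> tbase Y'" using ch by (auto simp: qchain_def map_car)
  then have "qchain (tbase Y') (tequiv Y') (tcls Y' (apsnd f p)) (tcls Y' (apsnd f q)) ?ch'"
    using ch unfolding qchain_def tcls_iff
    by (auto simp: hd_map last_map tequiv_apsnd simp del: apsnd_conv)
  moreover have "chain_cost (tdist Y') (map (map_prod (apsnd f) (apsnd f)) c) = chain_cost (tdist Y) c"
    if "set c \<subseteq> tbase Y \<times> tbase Y" for c
    using that by (induction c) (auto simp: tdist_apsnd simp del: apsnd_conv)
  then have "chain_cost (tdist Y') ?ch' = chain_cost (tdist Y) ch" using ch by (simp add: qchain_def)
  ultimately show "qdist (tbase Y') (tdist Y') (tequiv Y') (tcls Y' (apsnd f p)) (tcls Y' (apsnd f q))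
      \<le> chain_cost (tdist Y) ch"
    using qdist_le_chain_cost target.tdist_nonneg_on by metis
qed

definition tqdist_ext where
  "tqdist_ext p p' = (INF r\<in>tbase Y. tqdist Y p r + tdist Y' (apsnd f r) p')"

lemma tqdist_ext_bdd:
  "p \<in> tbase Y \<Longrightarrow> p' \<in> tbase Y' \<Longrightarrow> bdd_below ((\<lambda>r. tqdist Y p r + tdist Y' (apsnd f r) p') ` tbase Y)"
  by (intro bdd_belowI[where m = 0])
    (auto intro!: add_nonneg_nonneg source.tqdist_nonneg target.tdist_nonneg simp del: apsnd_conv
      simp: map_car)

lemma tqdist_ext_le:
  "p \<in> tbase Y \<Longrightarrow> p' \<in> tbase Y' \<Longrightarrow> r \<in> tbase Y \<Longrightarrow> tqdist_ext p p' \<le> tqdist Y p r + tdist Y' (apsnd f r) p'"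
  unfolding tqdist_ext_def by (intro cINF_lower tqdist_ext_bdd)

lemma tqdist_ext_greatest:
  assumes "\<And>r. r \<in> tbase Y \<Longrightarrow> c \<le> tqdist Y p r + tdist Y' (apsnd f r) p'"
  shows "c \<le> tqdist_ext p p'"
proof -
  have "tbase Y \<noteq> {}" using source.corner_in_car[of TT] by (metis empty_iff tbase_iff snd_conv)
  then show ?thesis unfolding tqdist_ext_def using assms by (intro cINF_greatest)
qed

lemma tqdist_ext_lipschitz:
  assumes p: "p \<in> tbase Y" and p': "p' \<in> tbase Y'" and p'': "p'' \<in> tbase Y'"
  shows "\<bar>tqdist_ext p p' - tqdist_ext p p''\<bar> \<le> tdist Y' p' p''"
proof -
  have one_side: "tqdist_ext p p' \<le> tqdist_ext p p'' + tdist Y' p'' p'"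
    if p': "p' \<in> tbase Y'" and p'': "p'' \<in> tbase Y'" for p' p''
  proof -
    have "tqdist_ext p p' - tdist Y' p'' p' \<le> tqdist Y p r + tdist Y' (apsnd f r) p''" if r: "r \<in> tbase Y" for r
      using tqdist_ext_le[OF p p' r] target.tdist_triangle[OF apsnd_tbase[OF r] p'' p'] by linarith
    then show ?thesis using tqdist_ext_greatest[of "tqdist_ext p p' - tdist Y' p'' p'"] by fastforce
  qed
  show ?thesis using one_side[OF p' p''] one_side[OF p'' p'] target.tdist_commute[OF p' p''] by linarith
qed

lemma tqdist_ext_apsnd:
  assumes p: "p \<in> tbase Y" and r: "r \<in> tbase Y"
  shows "tqdist_ext p (apsnd f r) = tqdist Y p r"
proof (rule antisym)
  show "tqdist_ext p (apsnd f r) \<le> tqdist Y p r"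
    using tqdist_ext_le[OF p apsnd_tbase[OF r] r] target.tdist_self[OF apsnd_tbase[OF r]] by simp
  have "tqdist Y p r \<le> tqdist Y p r' + tdist Y' (apsnd f r') (apsnd f r)" if "r' \<in> tbase Y" for r'
    using source.tqdist_lipschitz[OF p that r] tdist_apsnd[OF that r] by linarith
  then show "tqdist Y p r \<le> tqdist_ext p (apsnd f r)" by (rule tqdist_ext_greatest)
qed

text \<open>Glued points of \<open>M \<times> Y'\<close> are images of glued points of \<open>M \<times> Y\<close>, because \<open>f\<close> preserves corners.\<close>

lemma tqdist_ext_tequiv:
  assumes p: "p \<in> tbase Y" and "(p', p'') \<in> tequiv Y'"
  shows "tqdist_ext p p' = tqdist_ext p p''"
proof -
  obtain m A m' B where pp: "p' = (m, A)" "p'' = (m', B)" by fastforce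
  from assms(2) consider "p' = p''" | c c' where "glued m c m' c'" "A = corner c Y'" "B = corner c' Y'"
    unfolding pp target.tequiv_iff by blast
  then show ?thesis
  proof cases
    case 2
    then have glue: "((m, corner c Y), (m', corner c' Y)) \<in> tequiv Y"
      by (auto simp: source.tequiv_iff source.corner_in_car)
    have "tqdist_ext p p' = tqdist Y p (m, corner c Y)" "tqdist_ext p p'' = tqdist Y p (m', corner c' Y)"
      using tqdist_ext_apsnd[OF p, of "(m, corner c Y)"] tqdist_ext_apsnd[OF p, of "(m', corner c' Y)"] 2 pp
      by (simp_all add: map_corner source.corner_in_car)
    then show ?thesis using tqdist_cong[OF tequiv_refl[OF p] glue] by simp
  qed simp
qed

lemma tqdist_le_tqdist_apsnd:
  assumes p: "p \<in> tbase Y" and q: "q \<in> tbase Y"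
  shows "tqdist Y p q \<le> tqdist Y' (apsnd f p) (apsnd f q)"
proof -
  have "\<bar>tqdist_ext p (apsnd f p) - tqdist_ext p (apsnd f q)\<bar> \<le> tqdist Y' (apsnd f p) (apsnd f q)"
    using apsnd_tbase[OF p] apsnd_tbase[OF q]
    by (intro target.lipschitz_invariant_le_tqdist tqdist_ext_lipschitz[OF p] tqdist_ext_tequiv[OF p])
  then show ?thesis using tqdist_ext_apsnd[OF p p] tqdist_ext_apsnd[OF p q] source.tqdist_self[OF p] by simp
qed

lemma isometric_Fmap:
  assumes "\<alpha> \<in> car (Ften Y)" "\<beta> \<in> car (Ften Y)"
  shows "dst (Ften Y') (Fmap Y Y' f \<alpha>) (Fmap Y Y' f \<beta>) = dst (Ften Y) \<alpha> \<beta>"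
proof -
  obtain m y m' y' where y: "y \<in> car Y" "\<alpha> = tens1 Y m y" and y': "y' \<in> car Y" "\<beta> = tens1 Y m' y'"
    using assms by (auto elim!: car_FtenE)
  then show ?thesis
    using tqdist_apsnd_le[of "(m, y)" "(m', y')"] tqdist_le_tqdist_apsnd[of "(m, y)" "(m', y')"]
    by (simp add: Fmap_tens1 target.dst_Ften_tens1 source.dst_Ften_tens1 map_car)
qed

end

section \<open>The stages \<open>M\<^sup>n \<otimes> I\<close> and the space \<open>G\<close>\<close>

lemma tripointed_Itms: "tripointed Itms"
  unfolding tripointed_def Itms_def by auto

lemma car_Itms [simp]: "car Itms = UNIV"
  by (simp add: Itms_def)

lemma corner_Itms [simp]: "corner c Itms = c"
  by (cases c) (simp_all add: corner_def Itms_def)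

lemma admissible_Fpow_Itms: "admissible (Fpow Itms n)"
  by (rule admissible_Fpow[OF tripointed_Itms])

lemma tens_Itms_in_car: "tens Itms w z \<in> car (Fpow Itms (length w))"
  using tens_in_car[of z Itms w] by simp

lemma bang_eq: "bang z = tens1 (lift Itms) (corner_letter z) {([], z)}"
  by (simp add: bang_def corner_letter_def)

lemma pointed_map_emap_bang: "pointed_map (Fpow Itms k) (Fpow Itms (Suc k)) (emap Itms bang k)"
proof (induction k)
  case 0
  show ?case
  proof (intro pointed_map.intro pointed_map_axioms.intro admissible_Fpow_Itms)
    show "emap Itms bang 0 y \<in> car (Fpow Itms (Suc 0))" if "y \<in> car (Fpow Itms 0)" for y
      using that by (auto simp: lift_def bang_eq car_Ften)
    show "emap Itms bang 0 (corner c (Fpow Itms 0)) = corner c (Fpow Itms (Suc 0))" for c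
      by (simp add: corner_lift corner_Ften bang_eq)
  qed
next
  case (Suc k)
  then show ?case by (simp add: pointed_map.pointed_map_Fmap)
qed

lemma emap_bang_tens: "emap Itms bang (length w) (tens Itms w z) = tens Itms (w @ [corner_letter z]) z"
proof (induction w)
  case Nil
  then show ?case by (simp add: bang_eq)
next
  case (Cons m w)
  then show ?case
    using pointed_map.Fmap_tens1[OF pointed_map_emap_bang tens_Itms_in_car] by simp
qed

text \<open>A \<open>1\<close>-Lipschitz, glueing-invariant function on \<open>M \<times> I\<close> that is \<open>0\<close> at the corner
  \<open>corner_letter z \<otimes> z\<close> and \<open>1\<close> at the other two; it witnesses that \<open>!\<close> keeps the corners
  at distance \<open>1\<close>.\<close>

definition corner_potential :: "tri \<Rightarrow> Mlet \<Rightarrow> tri \<Rightarrow> real" where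
  "corner_potential z m c =
     (if m = corner_letter z \<and> c = z then 0 else if m = corner_letter c then 1 else 1 / 2)"

lemma corner_potential_glued: "glued m c m' c' \<Longrightarrow> corner_potential z m c = corner_potential z m' c'"
  by (cases z) (auto simp: glued_def corner_potential_def corner_letter_def)

lemma dst_bang: "dst (Ften (lift Itms)) (bang z) (bang z') = (if z = z' then 0 else 1)"
proof -
  interpret admissible "lift Itms" using admissible_Fpow_Itms[of 0] by simp
  let ?p = "(corner_letter z, {([], z)})" and ?q = "(corner_letter z', {([], z')})"
  have pq: "?p \<in> tbase (lift Itms)" "?q \<in> tbase (lift Itms)" by (auto simp: lift_def)
  have dst: "dst (Ften (lift Itms)) (bang z) (bang z') = tqdist (lift Itms) ?p ?q"
    unfolding bang_eq by (rule dst_Ften_tens1) (auto simp: lift_def)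
  define \<phi> where "\<phi> p = corner_potential z (fst p) (snd (the_elem (snd p)))" for p :: "Mlet \<times> tri pt"
  have "\<bar>\<phi> ?p - \<phi> ?q\<bar> \<le> tqdist (lift Itms) ?p ?q"
  proof (rule lipschitz_invariant_le_tqdist[OF pq])
    fix p q assume "p \<in> tbase (lift Itms)" "q \<in> tbase (lift Itms)"
    then obtain m c m' c' where "p = (m, {([], c)})" "q = (m', {([], c')})"
      by (cases p, cases q) (auto simp: lift_def)
    then show "\<bar>\<phi> p - \<phi> q\<bar> \<le> tdist (lift Itms) p q"
      by (cases z; cases m; cases m'; cases c; cases c')
        (simp_all add: \<phi>_def corner_potential_def corner_letter_def tdist_def lift_def Itms_def)
  next
    fix p q assume pq: "(p, q) \<in> tequiv (lift Itms)"
    obtain m A m' B where p: "p = (m, A)" and q: "q = (m', B)" by fastforce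
    from pq consider "p = q" | c c' where "glued m c m' c'" "A = {([], c)}" "B = {([], c')}"
      unfolding p q tequiv_iff corner_lift by auto
    then show "\<phi> p = \<phi> q"
      by cases (simp_all add: p q \<phi>_def corner_potential_glued)
  qed
  moreover have "z \<noteq> z' \<Longrightarrow> \<bar>\<phi> ?p - \<phi> ?q\<bar> = 1"
    by (cases z; cases z') (simp_all add: \<phi>_def corner_potential_def corner_letter_def)
  ultimately show ?thesis
    using tqdist_le_1[OF pq] tqdist_self[OF pq(1)] by (auto simp: dst)
qed

lemma isometric_emap_bang: "isometric_pointed_map (Fpow Itms k) (Fpow Itms (Suc k)) (emap Itms bang k)"
proof (induction k)
  case 0
  show ?case
  proof (intro isometric_pointed_map.intro isometric_pointed_map_axioms.intro pointed_map_emap_bang)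
    fix a b assume "a \<in> car (Fpow Itms 0)" "b \<in> car (Fpow Itms 0)"
    then obtain x y where "a = {([], x)}" "b = {([], y)}" by (auto simp: lift_def)
    moreover have "dst (lift Itms) {([], x)} {([], y)} = (if x = y then 0 else 1)"
      by (simp add: lift_def Itms_def)
    ultimately show "dst (Fpow Itms (Suc 0)) (emap Itms bang 0 a) (emap Itms bang 0 b) = dst (Fpow Itms 0) a b"
      by (simp add: dst_bang)
  qed
next
  case (Suc k)
  then show ?case
    by (intro isometric_pointed_map.intro isometric_pointed_map_axioms.intro pointed_map_emap_bang)
      (simp add: isometric_pointed_map.isometric_Fmap)
qed

definition Gemb :: "nat \<Rightarrow> nat \<Rightarrow> tri pt \<Rightarrow> tri pt" where
  "Gemb n N \<alpha> = Gembs n (N - n) \<alpha>"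

lemma Gemb_self [simp]: "Gemb n n \<alpha> = \<alpha>"
  by (simp add: Gemb_def)

lemma Gemb_Suc: "n \<le> N \<Longrightarrow> Gemb n (Suc N) \<alpha> = emap Itms bang N (Gemb n N \<alpha>)"
  by (simp add: Gemb_def Suc_diff_le)

lemma Gemb_in_car:
  assumes "n \<le> N" "\<alpha> \<in> car (Fpow Itms n)"
  shows "Gemb n N \<alpha> \<in> car (Fpow Itms N)"
  using assms(1)
proof (induction N rule: dec_induct)
  case (step N)
  then show ?case using pointed_map.map_car[OF pointed_map_emap_bang] by (simp add: Gemb_Suc)
qed (simp add: assms(2))

lemma Gemb_isometric:
  assumes "n \<le> N" "\<alpha> \<in> car (Fpow Itms n)" "\<beta> \<in> car (Fpow Itms n)"
  shows "dst (Fpow Itms N) (Gemb n N \<alpha>) (Gemb n N \<beta>) = dst (Fpow Itms n) \<alpha> \<beta>"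
  using assms(1)
proof (induction N rule: dec_induct)
  case (step N)
  then show ?case using isometric_pointed_map.isometric[OF isometric_emap_bang] assms(2,3)
    by (simp add: Gemb_Suc Gemb_in_car)
qed simp

lemma Gemb_trans:
  assumes "n \<le> k" "k \<le> N"
  shows "Gemb k N (Gemb n k \<alpha>) = Gemb n N \<alpha>"
  using assms(2) by (induction N rule: dec_induct) (use assms(1) in \<open>simp_all add: Gemb_Suc\<close>)

lemma Gemb_tens:
  assumes "length w = n" "n \<le> N"
  shows "Gemb n N (tens Itms w z) = tens Itms (w @ replicate (N - n) (corner_letter z)) z"
  using assms(2)
proof (induction N rule: dec_induct)
  case (step N)
  then show ?case using emap_bang_tens[of "w @ replicate (N - n) (corner_letter z)" z] assms(1)
    by (simp add: Gemb_Suc Suc_diff_le replicate_append_same[symmetric])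
qed simp

lemma Gcls_iff:
  "(k, \<beta>) \<in> Gcls n \<alpha> \<longleftrightarrow> \<alpha> \<in> car (Fpow Itms n) \<and> \<beta> \<in> car (Fpow Itms k) \<and> (\<exists>N\<ge>max n k. Gemb n N \<alpha> = Gemb k N \<beta>)"
  unfolding Gcls_def Grel_def Gemb_def by simp

lemma Gcls_self: "\<alpha> \<in> car (Fpow Itms n) \<Longrightarrow> (n, \<alpha>) \<in> Gcls n \<alpha>"
  unfolding Gcls_iff by auto

lemma dst_Gemb_stable:
  assumes "\<alpha> \<in> car (Fpow Itms n)" "\<beta> \<in> car (Fpow Itms k)" "n \<le> N" "k \<le> N" "N \<le> N'"
  shows "dst (Fpow Itms N') (Gemb n N' \<alpha>) (Gemb k N' \<beta>) = dst (Fpow Itms N) (Gemb n N \<alpha>) (Gemb k N \<beta>)"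
  using Gemb_isometric[OF assms(5) Gemb_in_car[OF assms(3,1)] Gemb_in_car[OF assms(4,2)]]
    Gemb_trans[OF assms(3,5)] Gemb_trans[OF assms(4,5)] by simp

text \<open>\<open>dG\<close> picks some pair of representatives; since the connecting maps are isometric, all
  choices give the distance at any common stage.\<close>

lemma dG_Gcls:
  assumes \<alpha>: "\<alpha> \<in> car (Fpow Itms n)" and \<beta>: "\<beta> \<in> car (Fpow Itms k)" and "n \<le> N" "k \<le> N"
  shows "dG (Gcls n \<alpha>) (Gcls k \<beta>) = dst (Fpow Itms N) (Gemb n N \<alpha>) (Gemb k N \<beta>)"
proof -
  have "\<exists>r. \<exists>(n', \<alpha>')\<in>Gcls n \<alpha>. \<exists>(k', \<beta>')\<in>Gcls k \<beta>.
      r = dst (Fpow Itms (max n' k')) (Gemb n' (max n' k') \<alpha>') (Gemb k' (max n' k') \<beta>')"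
    using Gcls_self[OF \<alpha>] Gcls_self[OF \<beta>] by blast
  from someI_ex[OF this] obtain n' \<alpha>' k' \<beta>' where
    a: "(n', \<alpha>') \<in> Gcls n \<alpha>" and b: "(k', \<beta>') \<in> Gcls k \<beta>" and
    r: "dG (Gcls n \<alpha>) (Gcls k \<beta>) = dst (Fpow Itms (max n' k')) (Gemb n' (max n' k') \<alpha>') (Gemb k' (max n' k') \<beta>')"
    unfolding dG_def Gemb_def by blast
  from a obtain N1 where a1: "\<alpha>' \<in> car (Fpow Itms n')" "max n n' \<le> N1" "Gemb n N1 \<alpha> = Gemb n' N1 \<alpha>'"
    unfolding Gcls_iff by blast
  from b obtain N2 where b1: "\<beta>' \<in> car (Fpow Itms k')" "max k k' \<le> N2" "Gemb k N2 \<beta> = Gemb k' N2 \<beta>'"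
    unfolding Gcls_iff by blast
  define M where "M = max N (max N1 N2)"
  have le: "N \<le> M" "N1 \<le> M" "N2 \<le> M" by (simp_all add: M_def)
  have "Gemb n' M \<alpha>' = Gemb n M \<alpha>" "Gemb k' M \<beta>' = Gemb k M \<beta>"
    using Gemb_trans[of n' N1 M \<alpha>'] Gemb_trans[of n N1 M \<alpha>] Gemb_trans[of k' N2 M \<beta>']
      Gemb_trans[of k N2 M \<beta>] a1 b1 le by simp_all
  moreover have "dG (Gcls n \<alpha>) (Gcls k \<beta>) = dst (Fpow Itms M) (Gemb n' M \<alpha>') (Gemb k' M \<beta>')"
    unfolding r using a1(2) b1(2) le by (intro dst_Gemb_stable[symmetric, OF a1(1) b1(1)]) auto
  ultimately show ?thesis using dst_Gemb_stable[OF \<alpha> \<beta> assms(3,4) le(1)] by simp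
qed

lemma Gpts_iff: "g \<in> Gpts \<longleftrightarrow> (\<exists>n \<alpha>. \<alpha> \<in> car (Fpow Itms n) \<and> g = Gcls n \<alpha>)"
  unfolding Gpts_def by blast

lemma Gcls_Gemb:
  assumes "n \<le> N" "\<alpha> \<in> car (Fpow Itms n)"
  shows "Gcls N (Gemb n N \<alpha>) = Gcls n \<alpha>"
proof -
  have key: "(\<exists>M\<ge>max N k. Gemb N M (Gemb n N \<alpha>) = Gemb k M \<beta>) \<longleftrightarrow> (\<exists>M\<ge>max n k. Gemb n M \<alpha> = Gemb k M \<beta>)"
    for k \<beta>
  proof
    assume "\<exists>M\<ge>max n k. Gemb n M \<alpha> = Gemb k M \<beta>"
    then obtain M where M: "max n k \<le> M" "Gemb n M \<alpha> = Gemb k M \<beta>" by blast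
    define M' where "M' = max M N"
    have "Gemb N M' (Gemb n N \<alpha>) = Gemb M M' (Gemb n M \<alpha>)"
      using Gemb_trans[of n N M' \<alpha>] Gemb_trans[of n M M' \<alpha>] M(1) assms(1) by (simp add: M'_def)
    also have "\<dots> = Gemb k M' \<beta>"
      using Gemb_trans[of k M M' \<beta>] M by (simp add: M'_def)
    finally show "\<exists>M\<ge>max N k. Gemb N M (Gemb n N \<alpha>) = Gemb k M \<beta>"
      using M(1) by (intro exI[of _ M']) (auto simp: M'_def)
  next
    assume "\<exists>M\<ge>max N k. Gemb N M (Gemb n N \<alpha>) = Gemb k M \<beta>"
    then obtain M where "max N k \<le> M" "Gemb N M (Gemb n N \<alpha>) = Gemb k M \<beta>" by blast
    then show "\<exists>M\<ge>max n k. Gemb n M \<alpha> = Gemb k M \<beta>"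
      using assms(1) Gemb_trans[of n N M \<alpha>] by (intro exI[of _ M]) auto
  qed
  have "(k, \<beta>) \<in> Gcls N (Gemb n N \<alpha>) \<longleftrightarrow> (k, \<beta>) \<in> Gcls n \<alpha>" for k \<beta>
    unfolding Gcls_iff using key[of k \<beta>] Gemb_in_car[OF assms] assms(2) by blast
  then show ?thesis by (simp add: set_eq_iff split_paired_All)
qed

lemma Gpts_common_stage:
  assumes "g \<in> Gpts" "h \<in> Gpts" "k \<in> Gpts"
  obtains N \<alpha> \<beta> \<gamma> where "\<alpha> \<in> car (Fpow Itms N)" "\<beta> \<in> car (Fpow Itms N)" "\<gamma> \<in> car (Fpow Itms N)"
    "g = Gcls N \<alpha>" "h = Gcls N \<beta>" "k = Gcls N \<gamma>"
proof -
  obtain n1 \<alpha> n2 \<beta> n3 \<gamma> where "\<alpha> \<in> car (Fpow Itms n1)" "\<beta> \<in> car (Fpow Itms n2)" "\<gamma> \<in> car (Fpow Itms n3)"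
    "g = Gcls n1 \<alpha>" "h = Gcls n2 \<beta>" "k = Gcls n3 \<gamma>"
    using assms unfolding Gpts_iff by blast
  moreover define N where "N = max n1 (max n2 n3)"
  ultimately show ?thesis
    by (intro that[of "Gemb n1 N \<alpha>" N "Gemb n2 N \<beta>" "Gemb n3 N \<gamma>"]) (simp_all add: Gemb_in_car Gcls_Gemb)
qed

lemma dG_Gcls_same_stage:
  "\<alpha> \<in> car (Fpow Itms N) \<Longrightarrow> \<beta> \<in> car (Fpow Itms N) \<Longrightarrow> dG (Gcls N \<alpha>) (Gcls N \<beta>) = dst (Fpow Itms N) \<alpha> \<beta>"
  using dG_Gcls[of \<alpha> N \<beta> N N] by simp

lemma dG_nonneg: "g \<in> Gpts \<Longrightarrow> h \<in> Gpts \<Longrightarrow> 0 \<le> dG g h"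
  by (rule Gpts_common_stage[of g h h]) (simp_all add: dG_Gcls_same_stage admissible.dst_nonneg[OF admissible_Fpow_Itms])

lemma dG_self: "g \<in> Gpts \<Longrightarrow> dG g g = 0"
  by (rule Gpts_common_stage[of g g g]) (simp_all add: dG_Gcls_same_stage admissible.dst_self[OF admissible_Fpow_Itms])

lemma dG_commute: "g \<in> Gpts \<Longrightarrow> h \<in> Gpts \<Longrightarrow> dG g h = dG h g"
  by (rule Gpts_common_stage[of g h h]) (simp_all add: dG_Gcls_same_stage admissible.dst_commute[OF admissible_Fpow_Itms])

lemma dG_triangle: "g \<in> Gpts \<Longrightarrow> h \<in> Gpts \<Longrightarrow> k \<in> Gpts \<Longrightarrow> dG g k \<le> dG g h + dG h k"
  by (rule Gpts_common_stage[of g h k]) (simp_all add: dG_Gcls_same_stage admissible.dst_triangle[OF admissible_Fpow_Itms])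

section \<open>Contraction estimates\<close>

context admissible
begin

lemma dst_Ften_same_letter:
  "y \<in> car Y \<Longrightarrow> y' \<in> car Y \<Longrightarrow> dst (Ften Y) (tens1 Y m y) (tens1 Y m y') \<le> dst Y y y' / 2"
  using tqdist_le_tdist[of "(m, y)" "(m, y')"] by (simp add: dst_Ften_tens1 tdist_def)

lemma dst_Ften_glued:
  assumes "glued m c m' c'" "y \<in> car Y" "y' \<in> car Y"
  shows "dst (Ften Y) (tens1 Y m y) (tens1 Y m' y') \<le> (dst Y y (corner c Y) + dst Y (corner c' Y) y') / 2"
proof -
  interpret F: admissible "Ften Y" by (rule admissible_Ften)
  have glue: "tens1 Y m (corner c Y) = tens1 Y m' (corner c' Y)"
    using assms(1) by (intro tens1_eq) (auto simp: tequiv_iff corner_in_car)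
  have "dst (Ften Y) (tens1 Y m y) (tens1 Y m' y')
      \<le> dst (Ften Y) (tens1 Y m y) (tens1 Y m (corner c Y)) + dst (Ften Y) (tens1 Y m' (corner c' Y)) (tens1 Y m' y')"
    unfolding glue by (rule F.dst_triangle) (simp_all add: tens1_in_car_Ften assms corner_in_car)
  also have "\<dots> \<le> dst Y y (corner c Y) / 2 + dst Y (corner c' Y) y' / 2"
    by (intro add_mono dst_Ften_same_letter) (simp_all add: assms corner_in_car)
  finally show ?thesis by simp
qed

end

lemma dst_tens_common_prefix:
  assumes X: "tripointed X" and "x \<in> car X" "x' \<in> car X" "length u' = length u"
  shows "dst (Fpow X (length w + length u)) (tens X (w @ u) x) (tens X (w @ u') x') \<le> (1/2) ^ length w"
proof (induction w)
  case Nil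
  have "tens X u x \<in> car (Fpow X (length u))" "tens X u' x' \<in> car (Fpow X (length u))"
    using tens_in_car[OF assms(2), of u] tens_in_car[OF assms(3), of u'] assms(4) by simp_all
  then show ?case using admissible.dst_le_1[OF admissible_Fpow[OF X]] by simp
next
  case (Cons m w)
  interpret admissible "Fpow X (length w + length u)" by (rule admissible_Fpow[OF X])
  have car: "tens X (w @ u) x \<in> car (Fpow X (length w + length u))"
    "tens X (w @ u') x' \<in> car (Fpow X (length w + length u))"
    using tens_in_car[OF assms(2), of "w @ u"] tens_in_car[OF assms(3), of "w @ u'"] assms(4) by simp_all
  have "dst (Fpow X (length (m # w) + length u)) (tens X ((m # w) @ u) x) (tens X ((m # w) @ u') x')
      \<le> dst (Fpow X (length w + length u)) (tens X (w @ u) x) (tens X (w @ u') x') / 2"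
    using dst_Ften_same_letter[OF car, of m] assms(4) by simp
  also have "\<dots> \<le> (1/2) ^ length (m # w)" using Cons.IH by simp
  finally show ?case .
qed

lemma tens_eq_corner_replicate:
  assumes X: "tripointed X" and "x \<in> car X" "tens X v x = corner c (Fpow X (length v))"
  shows "v = replicate (length v) (corner_letter c)"
  using assms(3)
proof (induction v)
  case (Cons m v)
  interpret admissible "Fpow X (length v)" by (rule admissible_Fpow[OF X])
  have "tens1 (Fpow X (length v)) m (tens X v x) = tens1 (Fpow X (length v)) (corner_letter c) (corner c (Fpow X (length v)))"
    using Cons.prems by (simp add: corner_Ften)
  then have "m = corner_letter c \<and> tens X v x = corner c (Fpow X (length v))"
    using tens_in_car[OF assms(2)] not_glued_corner_letter
    by (auto simp: tens1_eq_iff corner_in_car tequiv_iff corner_eq_iff dest: glued_sym)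
  then show ?case using Cons.IH by simp
qed simp

lemma dst_tens_corner:
  assumes "tripointed X" "x \<in> car X" "length v = n" "tens X v x = corner c (Fpow X n)"
  shows "dst (Fpow Itms n) (tens Itms v z) (corner c (Fpow Itms n)) \<le> (1/2) ^ n"
proof -
  have "v = replicate n (corner_letter c)" using tens_eq_corner_replicate[OF assms(1,2)] assms(3,4) by blast
  then show ?thesis
    using dst_tens_common_prefix[OF tripointed_Itms, of z c "[]" "[]" v] assms(3) by (simp add: corner_Fpow)
qed

lemma dst_tens_Itms_of_tens_eq:
  assumes X: "tripointed X" and "x \<in> car X" "x' \<in> car X"
  shows "length w = n \<Longrightarrow> length w' = n \<Longrightarrow> tens X w x = tens X w' x' \<Longrightarrow>
    dst (Fpow Itms n) (tens Itms w z) (tens Itms w' z') \<le> 2 * (1/2) ^ n"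
proof (induction n arbitrary: w w')
  case 0
  then have "w = []" "w' = []" by simp_all
  then show ?case
    using admissible.dst_le_1[OF admissible_Fpow_Itms tens_Itms_in_car[of "[]" z] tens_Itms_in_car[of "[]" z']]
    by simp
next
  case (Suc n)
  obtain m v where w: "w = m # v" "length v = n" using Suc.prems(1) by (cases w) auto
  obtain m' v' where w': "w' = m' # v'" "length v' = n" using Suc.prems(2) by (cases w') auto
  interpret X: admissible "Fpow X n" by (rule admissible_Fpow[OF X])
  interpret I: admissible "Fpow Itms n" by (rule admissible_Fpow_Itms)
  have car: "tens Itms v z \<in> car (Fpow Itms n)" "tens Itms v' z' \<in> car (Fpow Itms n)"
    using tens_Itms_in_car w(2) w'(2) by metis+
  have "tens1 (Fpow X n) m (tens X v x) = tens1 (Fpow X n) m' (tens X v' x')"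
    using Suc.prems(3) w w' by simp
  then consider "m = m'" "tens X v x = tens X v' x'"
    | c c' where "glued m c m' c'" "tens X v x = corner c (Fpow X n)" "tens X v' x' = corner c' (Fpow X n)"
    using tens_in_car[OF assms(2), of v] tens_in_car[OF assms(3), of v'] w(2) w'(2)
    by (auto simp: X.tens1_eq_iff X.tequiv_iff)
  then show ?case
  proof cases
    case 1
    then show ?thesis
      using I.dst_Ften_same_letter[OF car, of m] Suc.IH[OF w(2) w'(2)] w w' by simp
  next
    case 2
    have "dst (Fpow Itms (Suc n)) (tens Itms w z) (tens Itms w' z')
        \<le> (dst (Fpow Itms n) (tens Itms v z) (corner c (Fpow Itms n))
           + dst (Fpow Itms n) (corner c' (Fpow Itms n)) (tens Itms v' z')) / 2"
      using I.dst_Ften_glued[OF 2(1) car] w w' by simp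
    also have "\<dots> \<le> ((1/2) ^ n + (1/2) ^ n) / 2"
      using dst_tens_corner[OF X assms(2) w(2) 2(2), of z] dst_tens_corner[OF X assms(3) w'(2) 2(3), of z']
        I.dst_commute[OF car(2) I.corner_in_car[of c']]
      by (intro divide_right_mono add_mono) simp_all
    finally show ?thesis by simp
  qed
qed

section \<open>The limit in \<open>S\<close>\<close>

lemma theta_in_Gpts: "theta ms z n \<in> Gpts"
  unfolding theta_def Gpts_iff using tens_Itms_in_car[of "map ms [0..<n]" z] by auto

lemma dG_theta_le:
  assumes "n \<le> k"
  shows "dG (theta ms z n) (theta ms z k) \<le> (1/2) ^ n"
proof -
  let ?w = "map ms [0..<n]"
  have "map ms [0..<k] = ?w @ map ms [n..<k]"
    using upt_add_eq_append[of 0 n "k - n"] assms by simp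
  moreover have "tens Itms ?w z \<in> car (Fpow Itms n)" "tens Itms (map ms [0..<k]) z \<in> car (Fpow Itms k)"
    using tens_Itms_in_car[of ?w z] tens_Itms_in_car[of "map ms [0..<k]" z] by simp_all
  ultimately have "dG (theta ms z n) (theta ms z k)
      = dst (Fpow Itms (n + (k - n))) (tens Itms (?w @ replicate (k - n) (corner_letter z)) z)
          (tens Itms (?w @ map ms [n..<k]) z)"
    unfolding theta_def using dG_Gcls[of _ n _ k k] assms by (simp add: Gemb_tens)
  also have "\<dots> \<le> (1/2) ^ n"
    using dst_tens_common_prefix[OF tripointed_Itms, of z z "map ms [n..<k]" "replicate (k - n) (corner_letter z)" ?w]
    by simp
  finally show ?thesis .
qed

lemma Gcauchy_theta: "Gcauchy (theta ms z)"
  unfolding Gcauchy_def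
proof (intro conjI allI impI theta_in_Gpts)
  fix \<epsilon> :: real assume "\<epsilon> > 0"
  then obtain N where N: "(1/2::real) ^ N < \<epsilon>" using real_arch_pow_inv[of \<epsilon> "1/2"] by auto
  have close: "dG (theta ms z m) (theta ms z n) < \<epsilon>" if "N \<le> m" "m \<le> n" for m n
  proof -
    have "dG (theta ms z m) (theta ms z n) \<le> (1/2) ^ m" by (rule dG_theta_le[OF that(2)])
    also have "(1/2::real) ^ m \<le> (1/2) ^ N" using that(1) by (simp add: power_decreasing)
    finally show ?thesis using N by simp
  qed
  have "dG (theta ms z m) (theta ms z n) < \<epsilon>" if "N \<le> m" "N \<le> n" for m n
  proof (cases "m \<le> n")
    case False
    then show ?thesis using close[of n m] that dG_commute[OF theta_in_Gpts theta_in_Gpts] by simp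
  qed (use close that in blast)
  then show "\<exists>N. \<forall>m\<ge>N. \<forall>n\<ge>N. dG (theta ms z m) (theta ms z n) < \<epsilon>" by blast
qed

lemma dG_theta_of_tens_eq:
  assumes "tripointed X" "x \<in> car X" "x' \<in> car X"
    and "tens X (map ms [0..<n]) x = tens X (map ms' [0..<n]) x'"
  shows "dG (theta ms z n) (theta ms' z' n) \<le> 2 * (1/2) ^ n"
proof -
  have car: "tens Itms (map ms [0..<n]) z \<in> car (Fpow Itms n)" "tens Itms (map ms' [0..<n]) z' \<in> car (Fpow Itms n)"
    using tens_Itms_in_car[of "map ms [0..<n]" z] tens_Itms_in_car[of "map ms' [0..<n]" z'] by simp_all
  show ?thesis
    unfolding theta_def dG_Gcls_same_stage[OF car] using dst_tens_Itms_of_tens_eq[OF assms(1-3) _ _ assms(4)]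
    by simp
qed

lemma Gcauchy_const: "g \<in> Gpts \<Longrightarrow> Gcauchy (\<lambda>_. g)"
  unfolding Gcauchy_def by (simp add: dG_self)

lemma Srel_refl: "Gcauchy t \<Longrightarrow> (t, t) \<in> Srel"
  unfolding Srel_def Gcauchy_def by (simp add: dG_self)

lemma Gcauchy_convergent_dG:
  assumes s: "Gcauchy s" and t: "Gcauchy t"
  shows "convergent (\<lambda>k. dG (s k) (t k))"
proof -
  have pts: "s k \<in> Gpts" "t k \<in> Gpts" for k using s t by (simp_all add: Gcauchy_def)
  have diff: "\<bar>dG (s m) (t m) - dG (s k) (t k)\<bar> \<le> dG (s m) (s k) + dG (t m) (t k)" for m k
    using dG_triangle[OF pts(1)[of m] pts(1)[of k] pts(2)[of m]] dG_triangle[OF pts(1)[of k] pts(2)[of k] pts(2)[of m]]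
      dG_triangle[OF pts(1)[of k] pts(1)[of m] pts(2)[of k]] dG_triangle[OF pts(1)[of m] pts(2)[of m] pts(2)[of k]]
      dG_commute[OF pts(1)[of k] pts(1)[of m]] dG_commute[OF pts(2)[of k] pts(2)[of m]]
    by linarith
  have "Cauchy (\<lambda>k. dG (s k) (t k))"
  proof (rule metric_CauchyI)
    fix \<epsilon> :: real assume "0 < \<epsilon>"
    then obtain N1 N2 where "\<forall>m\<ge>N1. \<forall>k\<ge>N1. dG (s m) (s k) < \<epsilon>/2" "\<forall>m\<ge>N2. \<forall>k\<ge>N2. dG (t m) (t k) < \<epsilon>/2"
      using s t unfolding Gcauchy_def by (meson half_gt_zero)
    then have "dist (dG (s m) (t m)) (dG (s k) (t k)) < \<epsilon>" if "max N1 N2 \<le> m" "max N1 N2 \<le> k" for m k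
      using diff[of m k] that unfolding dist_real_def by fastforce
    then show "\<exists>M. \<forall>m\<ge>M. \<forall>n\<ge>M. dist (dG (s m) (t m)) (dG (s n) (t n)) < \<epsilon>" by blast
  qed
  then show ?thesis by (simp add: Cauchy_convergent_iff)
qed

lemma dS_bounds:
  assumes s: "Gcauchy s" and t: "Gcauchy t" and le: "\<And>k. n \<le> k \<Longrightarrow> dG (s k) (t k) \<le> b"
  shows "0 \<le> dS (Srel `` {s}) (Srel `` {t}) \<and> dS (Srel `` {s}) (Srel `` {t}) \<le> b"
proof -
  define \<sigma> where "\<sigma> = (SOME u. u \<in> Srel `` {s})"
  define \<tau> where "\<tau> = (SOME u. u \<in> Srel `` {t})"
  have "\<sigma> \<in> Srel `` {s}" "\<tau> \<in> Srel `` {t}"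
    unfolding \<sigma>_def \<tau>_def
    by (rule someI[where x = s], simp add: Srel_refl[OF s], rule someI[where x = t], simp add: Srel_refl[OF t])
  then have \<sigma>: "Gcauchy \<sigma>" "(\<lambda>k. dG (s k) (\<sigma> k)) \<longlonglongrightarrow> 0" and \<tau>: "Gcauchy \<tau>" "(\<lambda>k. dG (t k) (\<tau> k)) \<longlonglongrightarrow> 0"
    unfolding Srel_def by auto
  have pts: "s k \<in> Gpts" "t k \<in> Gpts" "\<sigma> k \<in> Gpts" "\<tau> k \<in> Gpts" for k
    using s t \<sigma>(1) \<tau>(1) by (simp_all add: Gcauchy_def)
  let ?a = "\<lambda>k. dG (\<sigma> k) (\<tau> k)"
  have lim: "?a \<longlonglongrightarrow> dS (Srel `` {s}) (Srel `` {t})"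
    unfolding dS_def \<sigma>_def[symmetric] \<tau>_def[symmetric]
    using Gcauchy_convergent_dG[OF \<sigma>(1) \<tau>(1)] by (simp add: convergent_LIMSEQ_iff)
  have "0 \<le> dS (Srel `` {s}) (Srel `` {t})"
    using pts dG_nonneg by (intro LIMSEQ_le_const[OF lim]) blast
  moreover have "dS (Srel `` {s}) (Srel `` {t}) \<le> 0 + b + 0"
  proof (rule LIMSEQ_le[OF lim])
    show "(\<lambda>k. dG (s k) (\<sigma> k) + b + dG (t k) (\<tau> k)) \<longlonglongrightarrow> 0 + b + 0"
      by (intro tendsto_add \<sigma>(2) \<tau>(2) tendsto_const)
    have "?a k \<le> dG (s k) (\<sigma> k) + b + dG (t k) (\<tau> k)" if "n \<le> k" for k
      using dG_triangle[OF pts(3)[of k] pts(1)[of k] pts(4)[of k]] dG_triangle[OF pts(1)[of k] pts(2)[of k] pts(4)[of k]]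
        dG_commute[OF pts(1)[of k] pts(3)[of k]]
        le[OF that] by linarith
    then show "\<exists>N. \<forall>k\<ge>N. ?a k \<le> dG (s k) (\<sigma> k) + b + dG (t k) (\<tau> k)" by blast
  qed
  ultimately show ?thesis by simp
qed

lemma tendsto_dS_Sinc:
  assumes t: "Gcauchy t" and s: "\<And>n. s n \<in> Gpts"
    and le: "\<And>n k. n \<le> k \<Longrightarrow> dG (s n) (t k) \<le> C * (1/2) ^ n"
  shows "(\<lambda>n. dS (Sinc (s n)) (Srel `` {t})) \<longlonglongrightarrow> 0"
proof (rule tendsto_sandwich[of "\<lambda>_. 0" _ _ "\<lambda>n. C * (1/2) ^ n"])
  have "0 \<le> dS (Sinc (s n)) (Srel `` {t}) \<and> dS (Sinc (s n)) (Srel `` {t}) \<le> C * (1/2) ^ n" for n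
    unfolding Sinc_def using dS_bounds[OF Gcauchy_const[OF s] t le] by blast
  then show "\<forall>\<^sub>F n in sequentially. 0 \<le> dS (Sinc (s n)) (Srel `` {t})"
    "\<forall>\<^sub>F n in sequentially. dS (Sinc (s n)) (Srel `` {t}) \<le> C * (1/2) ^ n"
    by simp_all
  show "(\<lambda>n. C * (1/2::real) ^ n) \<longlonglongrightarrow> 0"
    using tendsto_mult_right_zero[OF LIMSEQ_realpow_zero[of "1/2::real"]] by simp
qed simp

theorem mainTheorem5:
  fixes X :: "'x tms" and e :: "'x \<Rightarrow> 'x pt" and x :: 'x
  assumes "coalg X e"
    and "x \<in> car X"
  shows "\<exists>s\<in>Spts. \<forall>(ms :: nat \<Rightarrow> Mlet) (z :: tri).
           (\<forall>n. \<exists>xn\<in>car X. chi X e x n = tens X (map ms [0..<n]) xn) \<longrightarrow>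
           (\<lambda>n. dS (Sinc (theta ms z n)) s) \<longlonglongrightarrow> 0"
proof -
  have X: "tripointed X" using assms(1) by (simp add: coalg_def)
  define reads where "reads ms \<longleftrightarrow> (\<forall>n. \<exists>xn\<in>car X. chi X e x n = tens X (map ms [0..<n]) xn)" for ms
  obtain ms0 where ms0: "(\<exists>ms. reads ms) \<Longrightarrow> reads ms0" by blast
  let ?t0 = "theta ms0 TT"
  show ?thesis
  proof (intro bexI allI impI)
    show "Srel `` {?t0} \<in> Spts" unfolding Spts_def using Gcauchy_theta by blast
    fix ms z assume "\<forall>n. \<exists>xn\<in>car X. chi X e x n = tens X (map ms [0..<n]) xn"
    then have ms: "reads ms" and "reads ms0" using ms0 unfolding reads_def by blast+
    have same_stage: "dG (theta ms z k) (?t0 k) \<le> 2 * (1/2) ^ k" for k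
    proof -
      obtain xk yk where "xk \<in> car X" "yk \<in> car X"
        "tens X (map ms [0..<k]) xk = tens X (map ms0 [0..<k]) yk"
        using ms \<open>reads ms0\<close> unfolding reads_def by metis
      then show ?thesis by (rule dG_theta_of_tens_eq[OF X])
    qed
    have "dG (theta ms z n) (?t0 k) \<le> 3 * (1/2) ^ n" if "n \<le> k" for n k
    proof -
      have "(1/2::real) ^ k \<le> (1/2) ^ n" using that by (simp add: power_decreasing)
      then show ?thesis
        using dG_triangle[OF theta_in_Gpts[of ms z n] theta_in_Gpts[of ms z k] theta_in_Gpts[of ms0 TT k]]
          dG_theta_le[OF that, of ms z] same_stage[of k] by linarith
    qed
    then show "(\<lambda>n. dS (Sinc (theta ms z n)) (Srel `` {?t0})) \<longlonglongrightarrow> 0"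
      by (rule tendsto_dS_Sinc[OF Gcauchy_theta theta_in_Gpts])
  qed
qed

end
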